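(* Let $(\{\mathcal M_{A_i}\}_{i=1}^m,\tau)$ be a mutually commuting von Neumann algebra (MCvNA) model of a network $\Xi(n,m)$ with maximal independence number $h_{\max}$, i.e. $\tau$ is a network state. Let $2\le h\le h_{\max}$, let $R=\{r_1,\dots,r_h\}\in\Gamma(n,m,h^{D_h})$, and for every $i\in\{1,\dots,m\}$ let $A_{i,0},A_{i,1}\in\mathcal M_{A_i}$ be observables. Then $$\mathcal S_\tau=|I_\tau|^{1/h}+|J_\tau|^{1/h}\le 2\sqrt2 .$$
   Context: A network $\Xi(n,m)$ consists of $m$ parties $\mathbf A_1,\dots,\mathbf A_m$ and $n$ sources, each source being distributed to some subset of the parties. A set of parties is called independent if no two of its members receive a common source. For an integer $h$, $\Gamma(n,m,h^{D_h})$ denotes the family (of cardinality $D_h$) of all index sets $\{r_1,\dots,r_h\}\subset\{1,\dots,m\}$ such that $\mathbf A_{r_1},\dots,\mathbf A_{r_h}$ are independent; $h_{\max}$ is the largest $h$ for which this family is nonempty, and one always takes $2\le h\le h_{\max}$. MCvNA model of the network: von Neumann algebras $\mathcal M_{A_1},\dots,\mathcal M_{A_m}\subset\mathcal B(H)$ on a common Hilbert space $H$ which mutually commute ($\mathcal M_{A_i}\subset\mathcal M_{A_j}'$ for $i\neq j$), together with a state $\tau$ (positive linear functional with $\tau(I)=1$) on $\mathcal M_{A_1A_2\cdots A_m}:=(\mathcal M_{A_1}\vee\cdots\vee\mathcal M_{A_m})''$, called a network state, such that for every $h$ with $2\le h\le h_{\max}$ and every $\{r_1,\dots,r_h\}\in\Gamma(n,m,h^{D_h})$,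 $$\tau(A_{r_1}A_{r_2}\cdots A_{r_h})=\tau(A_{r_1})\tau(A_{r_2})\cdots\tau(A_{r_h})\quad\text{for all }A_{r_k}\in\mathcal M_{A_{r_k}}.$$ Observables: for each party $i$, $A_{i,0},A_{i,1}$ are self-adjoint elements of $\mathcal M_{A_i}$ with $-I\le A_{i,x}\le I$ (two inputs $x\in\{0,1\}$, outputs $\pm1$). Bell-type quantities: for fixed $h$ and $R=\{r_1,\dots,r_h\}\in\Gamma(n,m,h^{D_h})$, writing $R^c=\{1,\dots,m\}\setminus R$, $$I_\tau=\tau\Big(\prod_{i\in R}(A_{i,0}+A_{i,1})\prod_{j\in R^c}A_{j,0}\Big),\qquad J_\tau=\tau\Big(\prod_{i\in R}(A_{i,0}-A_{i,1})\prod_{j\in R^c}A_{j,1}\Big),$$ and $\mathcal S_\tau=|I_\tau|^{1/h}+|J_\tau|^{1/h}$ (the order of factors is irrelevant since the algebras commute). *)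

theory Defs
  imports "HOL-Analysis.Analysis"
begin

class complex_vector = real_vector +
  fixes scaleC :: "complex \<Rightarrow> 'a \<Rightarrow> 'a" (infixr "*\<^sub>C" 75)
  assumes scaleC_add_right: "a *\<^sub>C (x + y) = a *\<^sub>C x + a *\<^sub>C y"
    and scaleC_add_left: "(a + b) *\<^sub>C x = a *\<^sub>C x + b *\<^sub>C x"
    and scaleC_scaleC: "a *\<^sub>C (b *\<^sub>C x) = (a * b) *\<^sub>C x"
    and scaleC_one: "1 *\<^sub>C x = x"
    and scaleR_scaleC: "scaleR r x = complex_of_real r *\<^sub>C x"

class complex_inner = complex_vector + real_normed_vector +
  fixes cinner :: "'a \<Rightarrow> 'a \<Rightarrow> complex"
  assumes cinner_conj: "cinner x y = cnj (cinner y x)"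
    and cinner_add_right: "cinner x (y + z) = cinner x y + cinner x z"
    and cinner_scaleC_right: "cinner x (a *\<^sub>C y) = a * cinner x y"
    and cinner_self_nonneg: "0 \<le> Re (cinner x x)"
    and cinner_self_eq_zero: "cinner x x = 0 \<longleftrightarrow> x = 0"
    and norm_eq_sqrt_cinner: "norm x = sqrt (Re (cinner x x))"

class chilbert_space = complex_inner + complete_space

text \<open>Consistency check: the complex numbers form a complex Hilbert space.\<close>
instantiation complex :: chilbert_space
begin
definition scaleC_complex :: "complex \<Rightarrow> complex \<Rightarrow> complex" where
  "scaleC_complex a x = a * x"
definition cinner_complex :: "complex \<Rightarrow> complex \<Rightarrow> complex" where
  "cinner_complex x y = cnj x * y"
instance
proof
  fix a b x y z :: complex and r :: real
  show "a *\<^sub>C (x + y) = a *\<^sub>C x + a *\<^sub>C y" by (simp add: scaleC_complex_def algebra_simps)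
  show "(a + b) *\<^sub>C x = a *\<^sub>C x + b *\<^sub>C x" by (simp add: scaleC_complex_def algebra_simps)
  show "a *\<^sub>C (b *\<^sub>C x) = (a * b) *\<^sub>C x" by (simp add: scaleC_complex_def algebra_simps)
  show "1 *\<^sub>C x = x" by (simp add: scaleC_complex_def)
  show "scaleR r x = complex_of_real r *\<^sub>C x" by (simp add: scaleC_complex_def scaleR_conv_of_real)
  show "cinner x y = cnj (cinner y x)" by (simp add: cinner_complex_def mult.commute)
  show "cinner x (y + z) = cinner x y + cinner x z" by (simp add: cinner_complex_def algebra_simps)
  show "cinner x (a *\<^sub>C y) = a * cinner x y" by (simp add: cinner_complex_def scaleC_complex_def algebra_simps)
  show "0 \<le> Re (cinner x x)" by (simp add: cinner_complex_def)
  show "cinner x x = 0 \<longleftrightarrow> x = 0" by (simp add: cinner_complex_def)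
  show "norm x = sqrt (Re (cinner x x))"
    by (simp add: cinner_complex_def cmod_def power2_eq_square)
qed
end

definition bounded_clinear_op :: "('h::complex_inner \<Rightarrow> 'h) \<Rightarrow> bool" where
  "bounded_clinear_op T \<longleftrightarrow>
     (\<forall>x y. T (x + y) = T x + T y) \<and> (\<forall>c x. T (c *\<^sub>C x) = c *\<^sub>C T x) \<and>
     (\<exists>K. \<forall>x. norm (T x) \<le> norm x * K)"

definition BH :: "('h::complex_inner \<Rightarrow> 'h) set" where
  "BH = {T. bounded_clinear_op T}"

definition adj :: "('h::complex_inner \<Rightarrow> 'h) \<Rightarrow> ('h \<Rightarrow> 'h)" where
  "adj T = (SOME S. \<forall>x y. cinner (S x) y = cinner x (T y))"

definition op_plus :: "('h::complex_inner \<Rightarrow> 'h) \<Rightarrow> ('h \<Rightarrow> 'h) \<Rightarrow> ('h \<Rightarrow> 'h)" where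
  "op_plus A B = (\<lambda>x. A x + B x)"

definition op_minus :: "('h::complex_inner \<Rightarrow> 'h) \<Rightarrow> ('h \<Rightarrow> 'h) \<Rightarrow> ('h \<Rightarrow> 'h)" where
  "op_minus A B = (\<lambda>x. A x - B x)"

definition op_scale :: "complex \<Rightarrow> ('h::complex_inner \<Rightarrow> 'h) \<Rightarrow> ('h \<Rightarrow> 'h)" where
  "op_scale c A = (\<lambda>x. c *\<^sub>C A x)"

definition pos_op :: "('h::complex_inner \<Rightarrow> 'h) \<Rightarrow> bool" where
  "pos_op P \<longleftrightarrow> (\<forall>x. Im (cinner x (P x)) = 0 \<and> 0 \<le> Re (cinner x (P x)))"

definition op_le :: "('h::complex_inner \<Rightarrow> 'h) \<Rightarrow> ('h \<Rightarrow> 'h) \<Rightarrow> bool" where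
  "op_le A B \<longleftrightarrow> pos_op (op_minus B A)"

definition commutant :: "('h::complex_inner \<Rightarrow> 'h) set \<Rightarrow> ('h \<Rightarrow> 'h) set" where
  "commutant S = {T \<in> BH. \<forall>A\<in>S. T \<circ> A = A \<circ> T}"

definition von_neumann_algebra :: "('h::complex_inner \<Rightarrow> 'h) set \<Rightarrow> bool" where
  "von_neumann_algebra M \<longleftrightarrow>
     M \<subseteq> BH \<and> (\<forall>A\<in>M. adj A \<in> M) \<and> commutant (commutant M) = M"

definition joint_vN :: "(nat \<Rightarrow> ('h::complex_inner \<Rightarrow> 'h) set) \<Rightarrow> nat \<Rightarrow> ('h \<Rightarrow> 'h) set" where
  "joint_vN M m = commutant (commutant (\<Union>i\<in>{1..m}. M i))"

definition is_state :: "('h::complex_inner \<Rightarrow> 'h) set \<Rightarrow> (('h \<Rightarrow> 'h) \<Rightarrow> complex) \<Rightarrow> bool" where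
  "is_state N tau \<longleftrightarrow>
     (\<forall>A\<in>N. \<forall>B\<in>N. tau (op_plus A B) = tau A + tau B) \<and>
     (\<forall>c. \<forall>A\<in>N. tau (op_scale c A) = c * tau A) \<and>
     (\<forall>P\<in>N. pos_op P \<longrightarrow> Im (tau P) = 0 \<and> 0 \<le> Re (tau P)) \<and>
     tau id = 1"

definition prod_ops :: "(nat \<Rightarrow> ('h \<Rightarrow> 'h)) \<Rightarrow> nat set \<Rightarrow> ('h \<Rightarrow> 'h)" where
  "prod_ops f S = foldr (\<lambda>i acc. f i \<circ> acc) (sorted_list_of_set S) id"

text \<open>Network Xi(n,m): sources 1..n, parties 1..m; src s is the set of parties receiving source s.\<close>
definition network :: "nat \<Rightarrow> nat \<Rightarrow> (nat \<Rightarrow> nat set) \<Rightarrow> bool" where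
  "network n m src \<longleftrightarrow> (\<forall>s\<in>{1..n}. src s \<subseteq> {1..m})"

definition independent_parties :: "nat \<Rightarrow> (nat \<Rightarrow> nat set) \<Rightarrow> nat set \<Rightarrow> bool" where
  "independent_parties n src R \<longleftrightarrow>
     (\<forall>i\<in>R. \<forall>j\<in>R. i \<noteq> j \<longrightarrow> \<not> (\<exists>s\<in>{1..n}. i \<in> src s \<and> j \<in> src s))"

definition Gamma_net :: "nat \<Rightarrow> nat \<Rightarrow> (nat \<Rightarrow> nat set) \<Rightarrow> nat \<Rightarrow> nat set set" where
  "Gamma_net n m src h = {R. R \<subseteq> {1..m} \<and> card R = h \<and> independent_parties n src R}"

definition hmax :: "nat \<Rightarrow> nat \<Rightarrow> (nat \<Rightarrow> nat set) \<Rightarrow> nat" where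
  "hmax n m src = Max {h. Gamma_net n m src h \<noteq> {}}"

definition network_state ::
  "nat \<Rightarrow> nat \<Rightarrow> (nat \<Rightarrow> nat set) \<Rightarrow> (nat \<Rightarrow> ('h::complex_inner \<Rightarrow> 'h) set)
     \<Rightarrow> (('h \<Rightarrow> 'h) \<Rightarrow> complex) \<Rightarrow> bool" where
  "network_state n m src M tau \<longleftrightarrow>
     (\<forall>h. 2 \<le> h \<and> h \<le> hmax n m src \<longrightarrow>
        (\<forall>R\<in>Gamma_net n m src h. \<forall>A. (\<forall>k\<in>R. A k \<in> M k) \<longrightarrow>
            tau (prod_ops A R) = (\<Prod>k\<in>R. tau (A k))))"

definition mcvna_model ::
  "nat \<Rightarrow> nat \<Rightarrow> (nat \<Rightarrow> nat set) \<Rightarrow> (nat \<Rightarrow> ('h::complex_inner \<Rightarrow> 'h) set)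
     \<Rightarrow> (('h \<Rightarrow> 'h) \<Rightarrow> complex) \<Rightarrow> bool" where
  "mcvna_model n m src M tau \<longleftrightarrow>
     (\<forall>i\<in>{1..m}. von_neumann_algebra (M i)) \<and>
     (\<forall>i\<in>{1..m}. \<forall>j\<in>{1..m}. i \<noteq> j \<longrightarrow> M i \<subseteq> commutant (M j)) \<and>
     is_state (joint_vN M m) tau \<and>
     network_state n m src M tau"

definition observable_in :: "('h::complex_inner \<Rightarrow> 'h) set \<Rightarrow> ('h \<Rightarrow> 'h) \<Rightarrow> bool" where
  "observable_in M A \<longleftrightarrow> A \<in> M \<and> adj A = A \<and> op_le (op_scale (-1) id) A \<and> op_le A id"

definition I_tau :: "nat \<Rightarrow> nat set \<Rightarrow> (nat \<Rightarrow> ('h::complex_inner \<Rightarrow> 'h)) \<Rightarrow> (nat \<Rightarrow> ('h \<Rightarrow> 'h))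
     \<Rightarrow> (('h \<Rightarrow> 'h) \<Rightarrow> complex) \<Rightarrow> complex" where
  "I_tau m R A0 A1 tau =
     tau (prod_ops (\<lambda>i. if i \<in> R then op_plus (A0 i) (A1 i) else A0 i) {1..m})"

definition J_tau :: "nat \<Rightarrow> nat set \<Rightarrow> (nat \<Rightarrow> ('h::complex_inner \<Rightarrow> 'h)) \<Rightarrow> (nat \<Rightarrow> ('h \<Rightarrow> 'h))
     \<Rightarrow> (('h \<Rightarrow> 'h) \<Rightarrow> complex) \<Rightarrow> complex" where
  "J_tau m R A0 A1 tau =
     tau (prod_ops (\<lambda>i. if i \<in> R then op_minus (A0 i) (A1 i) else A1 i) {1..m})"

definition S_tau :: "nat \<Rightarrow> nat \<Rightarrow> nat set \<Rightarrow> (nat \<Rightarrow> ('h::complex_inner \<Rightarrow> 'h)) \<Rightarrow> (nat \<Rightarrow> ('h \<Rightarrow> 'h))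
     \<Rightarrow> (('h \<Rightarrow> 'h) \<Rightarrow> complex) \<Rightarrow> real" where
  "S_tau h m R A0 A1 tau =
     cmod (I_tau m R A0 A1 tau) powr (1 / real h) + cmod (J_tau m R A0 A1 tau) powr (1 / real h)"

end

theory Submission
  imports Defs
begin

text \<open>Write the operator inside \<open>I_tau\<close> as \<open>P X\<close>, where \<open>P\<close> is the product over
  the independent set \<open>R\<close> of the \<open>A0 i + A1 i\<close> and \<open>X\<close> is the product of the
  remaining \<open>A0 j\<close>. All factors commute, \<open>P\<close> is hermitian and \<open>X\<close> is a hermitian
  contraction, so Cauchy-Schwarz for the state gives
  \<open>|tau (P X)|\<^sup>2 \<le> tau (P\<^sup>2) tau (X\<^sup>2) \<le> tau (P\<^sup>2)\<close>, and independence of \<open>R\<close>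
  factorizes \<open>tau (P\<^sup>2)\<close> into the product of the \<open>tau ((A0 i + A1 i)\<^sup>2)\<close>.
  The same holds for \<open>J_tau\<close> with differences. As
  \<open>tau ((A0 + A1)\<^sup>2) + tau ((A0 - A1)\<^sup>2) = 2 tau (A0\<^sup>2) + 2 tau (A1\<^sup>2) \<le> 4\<close>,
  AM-GM gives \<open>|I_tau|\<^bsup>2/h\<^esup> + |J_tau|\<^bsup>2/h\<^esup> \<le> 4\<close>, hence the sum of the
  \<open>h\<close>-th roots is at most \<open>2 sqrt 2\<close>.\<close>

section \<open>Real inequalities\<close>

lemma powr_square_eq_square_powr:
  fixes x :: real
  assumes "0 \<le> x"
  shows "(x powr a)\<^sup>2 = (x\<^sup>2) powr a"
proof (cases "x = 0")
  case False
  then have "(x powr a)\<^sup>2 = (x powr 2) powr a"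
    by (simp add: powr_power powr_powr mult.commute)
  also have "x powr 2 = x\<^sup>2"
    using assms False powr_realpow[of x 2] by simp
  finally show ?thesis .
qed simp

lemma powr_inverse_card_square_le_mean:
  fixes a :: "'a \<Rightarrow> real"
  assumes "finite S" "S \<noteq> {}" "\<And>i. i \<in> S \<Longrightarrow> 0 \<le> a i"
    and "0 \<le> x" "x\<^sup>2 \<le> (\<Prod>i\<in>S. a i)"
  shows "(x powr (1 / card S))\<^sup>2 \<le> (\<Sum>i\<in>S. a i) / card S"
proof -
  have "(x powr (1 / card S))\<^sup>2 = (x\<^sup>2) powr (1 / card S)"
    using assms(4) by (rule powr_square_eq_square_powr)
  also have "\<dots> \<le> (\<Prod>i\<in>S. a i) powr (1 / card S)"
    using assms(5) by (intro powr_mono2) auto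
  also have "\<dots> \<le> (\<Sum>i\<in>S. a i / card S)"
    using assms(1-3) by (rule arith_geom_mean)
  finally show ?thesis
    by (simp add: sum_divide_distrib)
qed

lemma add_le_two_sqrt_two:
  fixes u v :: real
  assumes "0 \<le> u" "0 \<le> v" "u\<^sup>2 + v\<^sup>2 \<le> 4"
  shows "u + v \<le> 2 * sqrt 2"
proof (rule power2_le_imp_le)
  have "(u + v)\<^sup>2 \<le> 2 * (u\<^sup>2 + v\<^sup>2)"
    using sum_squares_bound[of u v] by (simp add: power2_sum)
  then show "(u + v)\<^sup>2 \<le> (2 * sqrt 2)\<^sup>2"
    using assms(3) by (simp add: power_mult_distrib)
qed simp

lemma powr_inverse_card_add_le_two_sqrt_two:
  fixes a b :: "'a \<Rightarrow> real"
  assumes "finite S" "S \<noteq> {}"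
    and ab: "\<And>i. i \<in> S \<Longrightarrow> 0 \<le> a i \<and> 0 \<le> b i \<and> a i + b i \<le> 4"
    and "0 \<le> x" "x\<^sup>2 \<le> (\<Prod>i\<in>S. a i)" "0 \<le> y" "y\<^sup>2 \<le> (\<Prod>i\<in>S. b i)"
  shows "x powr (1 / card S) + y powr (1 / card S) \<le> 2 * sqrt 2"
proof (rule add_le_two_sqrt_two)
  have "(\<Sum>i\<in>S. a i) + (\<Sum>i\<in>S. b i) \<le> (\<Sum>i\<in>S. 4)"
    unfolding sum.distrib[symmetric] using ab by (intro sum_mono) auto
  then have "(\<Sum>i\<in>S. a i) / card S + (\<Sum>i\<in>S. b i) / card S \<le> 4"
    using assms(1,2) by (simp add: card_gt_0_iff add_divide_distrib[symmetric] divide_le_eq)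
  then show "(x powr (1 / card S))\<^sup>2 + (y powr (1 / card S))\<^sup>2 \<le> 4"
    using powr_inverse_card_square_le_mean[of S a x] powr_inverse_card_square_le_mean[of S b y]
      assms by fastforce
qed simp_all

lemma quadratic_nonneg_discriminant:
  fixes a b c :: real
  assumes "0 \<le> a" "0 \<le> c" "\<And>t. 0 \<le> a * t\<^sup>2 + 2 * b * t + c"
  shows "b\<^sup>2 \<le> a * c"
proof (cases "a = 0")
  case True
  with assms(3)[of "- (c + 1) / (2 * b)"] show ?thesis
    by (cases "b = 0") (simp_all add: field_simps)
next
  case False
  with assms(1) have "0 < a"
    by simp
  with assms(3)[of "- b / a"] show ?thesis
    by (simp add: power2_eq_square field_simps)
qed

section \<open>Complex inner product spaces\<close>

lemma scaleC_of_real: "complex_of_real r *\<^sub>C x = r *\<^sub>R x"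
  by (simp add: scaleR_scaleC)

lemma cinner_add_left: "cinner (x + y) z = cinner x z + cinner y z"
  by (metis cinner_conj cinner_add_right complex_cnj_add)

lemma cinner_scaleC_left: "cinner (c *\<^sub>C x) y = cnj c * cinner x y"
  by (metis cinner_conj cinner_scaleC_right complex_cnj_mult)

lemma scaleC_minus_one [simp]: "(- 1) *\<^sub>C x = - x"
  using scaleC_of_real[of "- 1" x] by simp

lemma cinner_minus_right [simp]: "cinner x (- y) = - cinner x y"
  using cinner_scaleC_right[of x "- 1" y] by simp

lemma cinner_minus_left [simp]: "cinner (- x) y = - cinner x y"
  by (metis cinner_conj cinner_minus_right complex_cnj_minus)

lemma cinner_diff_right: "cinner x (y - z) = cinner x y - cinner x z"
  using cinner_add_right[of x y "- z"] by simp

lemma cinner_diff_left: "cinner (x - y) z = cinner x z - cinner y z"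
  using cinner_add_left[of x "- y" z] by simp

lemma Im_cinner_self [simp]: "Im (cinner x x) = 0"
  using arg_cong[OF cinner_conj[of x x], of Im] by simp

lemma power2_norm_eq_cinner: "(norm x)\<^sup>2 = Re (cinner x x)"
  by (simp add: norm_eq_sqrt_cinner cinner_self_nonneg)

section \<open>Bounded operators and their algebras\<close>

lemma BH_iff:
  "T \<in> BH \<longleftrightarrow> (\<forall>x y. T (x + y) = T x + T y) \<and> (\<forall>c x. T (c *\<^sub>C x) = c *\<^sub>C T x) \<and>
     (\<exists>K\<ge>0. \<forall>x. norm (T x) \<le> norm x * K)"
proof -
  have "(\<exists>K. \<forall>x. norm (T x) \<le> norm x * K) \<longleftrightarrow> (\<exists>K\<ge>0. \<forall>x. norm (T x) \<le> norm x * K)"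
    by (metis max.cobounded1 max.cobounded2 mult_left_mono norm_ge_zero order_trans)
  then show ?thesis
    by (simp add: BH_def bounded_clinear_op_def)
qed

lemma BH_apply_add: "T \<in> BH \<Longrightarrow> T (x + y) = T x + T y"
  by (simp add: BH_iff)

lemma BH_apply_scaleC: "T \<in> BH \<Longrightarrow> T (c *\<^sub>C x) = c *\<^sub>C T x"
  by (simp add: BH_iff)

lemma BH_apply_scaleR: "T \<in> BH \<Longrightarrow> T (r *\<^sub>R x) = r *\<^sub>R T x"
  by (simp add: scaleR_scaleC BH_apply_scaleC)

lemma BH_apply_diff: "T \<in> BH \<Longrightarrow> T (x - y) = T x - T y"
  by (metis BH_apply_add add_diff_cancel_right' diff_add_cancel)

lemma BH_id: "id \<in> BH"
  by (auto simp: BH_iff intro!: exI[of _ 1])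

lemma BH_comp:
  assumes "T \<in> BH" "S \<in> BH"
  shows "T \<circ> S \<in> BH"
proof -
  obtain K L where "K \<ge> 0" "\<forall>x. norm (T x) \<le> norm x * K" "L \<ge> 0" "\<forall>x. norm (S x) \<le> norm x * L"
    using assms by (auto simp: BH_iff)
  then have "\<forall>x. norm (T (S x)) \<le> norm x * (L * K)"
    by (metis mult.assoc mult_right_mono order_trans)
  with \<open>K \<ge> 0\<close> \<open>L \<ge> 0\<close> assms show ?thesis
    by (simp add: BH_iff) (meson zero_le_mult_iff)
qed

lemma BH_op_plus:
  assumes "T \<in> BH" "S \<in> BH"
  shows "op_plus T S \<in> BH"
proof -
  obtain K L where "K \<ge> 0" "\<forall>x. norm (T x) \<le> norm x * K" "L \<ge> 0" "\<forall>x. norm (S x) \<le> norm x * L"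
    using assms by (auto simp: BH_iff)
  then have "\<forall>x. norm (T x + S x) \<le> norm x * (K + L)"
    by (smt (verit) distrib_left norm_triangle_ineq)
  with \<open>K \<ge> 0\<close> \<open>L \<ge> 0\<close> assms show ?thesis
    by (auto simp: BH_iff op_plus_def scaleC_add_right intro!: exI[of _ "K + L"])
qed

lemma BH_op_scale_real:
  assumes "T \<in> BH"
  shows "op_scale (complex_of_real t) T \<in> BH"
proof -
  obtain K where "K \<ge> 0" "\<forall>x. norm (T x) \<le> norm x * K"
    using assms by (auto simp: BH_iff)
  then have "\<forall>x. norm (op_scale (complex_of_real t) T x) \<le> norm x * (\<bar>t\<bar> * K)"
    by (simp add: op_scale_def scaleC_of_real mult.left_commute mult_left_mono)
  with \<open>K \<ge> 0\<close> assms show ?thesis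
    unfolding BH_iff
    by (auto simp: op_scale_def scaleC_add_right scaleC_scaleC mult.commute intro!: exI[of _ "\<bar>t\<bar> * K"])
qed

lemma op_minus_eq_op_plus_op_scale:
  "op_minus A B = op_plus A (op_scale (- 1) B)"
  by (simp add: fun_eq_iff op_minus_def op_plus_def op_scale_def scaleC_of_real)

definition unital_op_algebra :: "('h::complex_inner \<Rightarrow> 'h) set \<Rightarrow> bool" where
  "unital_op_algebra N \<longleftrightarrow> N \<subseteq> BH \<and> id \<in> N \<and>
     (\<forall>A\<in>N. \<forall>B\<in>N. op_plus A B \<in> N \<and> A \<circ> B \<in> N) \<and>
     (\<forall>t. \<forall>A\<in>N. op_scale (complex_of_real t) A \<in> N)"

context
  fixes N :: "('h::complex_inner \<Rightarrow> 'h) set"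
  assumes N: "unital_op_algebra N"
begin

lemma unital_op_algebra_BH: "A \<in> N \<Longrightarrow> A \<in> BH"
  using N by (auto simp: unital_op_algebra_def)

lemma unital_op_algebra_id: "id \<in> N"
  using N by (simp add: unital_op_algebra_def)

lemma unital_op_algebra_plus: "A \<in> N \<Longrightarrow> B \<in> N \<Longrightarrow> op_plus A B \<in> N"
  using N by (simp add: unital_op_algebra_def)

lemma unital_op_algebra_comp: "A \<in> N \<Longrightarrow> B \<in> N \<Longrightarrow> A \<circ> B \<in> N"
  using N by (simp add: unital_op_algebra_def)

lemma unital_op_algebra_scale: "A \<in> N \<Longrightarrow> op_scale (complex_of_real t) A \<in> N"
  using N by (simp add: unital_op_algebra_def)

lemma unital_op_algebra_minus: "A \<in> N \<Longrightarrow> B \<in> N \<Longrightarrow> op_minus A B \<in> N"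
  using unital_op_algebra_plus unital_op_algebra_scale[of B "- 1"]
  by (simp add: op_minus_eq_op_plus_op_scale)

end

lemma commutant_unital_op_algebra:
  assumes "S \<subseteq> BH"
  shows "unital_op_algebra (commutant S)"
proof -
  have lin: "A (x + y) = A x + A y" "A (c *\<^sub>C x) = c *\<^sub>C A x" if "A \<in> S" for A x y c
    using that assms by (auto intro: BH_apply_add BH_apply_scaleC)
  have comm: "T (A x) = A (T x)" if "T \<in> commutant S" "A \<in> S" for T A x
    using that by (auto simp: commutant_def fun_eq_iff)
  have "op_plus T U \<in> commutant S" if T: "T \<in> commutant S" and U: "U \<in> commutant S" for T U
  proof -
    have "op_plus T U \<circ> A = A \<circ> op_plus T U" if "A \<in> S" for A
      using comm[OF T that] comm[OF U that] lin(1)[OF that] by (simp add: op_plus_def fun_eq_iff)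
    with T U show ?thesis
      by (simp add: commutant_def BH_op_plus)
  qed
  moreover have "op_scale (complex_of_real t) T \<in> commutant S" if T: "T \<in> commutant S" for t T
  proof -
    have "op_scale (complex_of_real t) T \<circ> A = A \<circ> op_scale (complex_of_real t) T" if "A \<in> S" for A
      using comm[OF T that] lin(2)[OF that] by (simp add: op_scale_def fun_eq_iff)
    with T show ?thesis
      by (simp add: commutant_def BH_op_scale_real)
  qed
  moreover have "T \<circ> U \<in> commutant S" if "T \<in> commutant S" "U \<in> commutant S" for T U
    using that by (auto simp: commutant_def BH_comp) (metis comp_assoc)
  ultimately show ?thesis
    by (auto simp: unital_op_algebra_def commutant_def BH_id)
qed

lemma double_commutant_unital_op_algebra: "unital_op_algebra (commutant (commutant S))"
  by (rule commutant_unital_op_algebra) (auto simp: commutant_def)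

lemma subset_double_commutant: "S \<subseteq> BH \<Longrightarrow> S \<subseteq> commutant (commutant S)"
  by (auto simp: commutant_def)

section \<open>Hermitian operators and contractions\<close>

definition hermitian_op :: "('h::complex_inner \<Rightarrow> 'h) \<Rightarrow> bool" where
  "hermitian_op T \<longleftrightarrow> (\<forall>x y. cinner (T x) y = cinner x (T y))"

definition contraction_op :: "('h::complex_inner \<Rightarrow> 'h) \<Rightarrow> bool" where
  "contraction_op T \<longleftrightarrow> (\<forall>x. norm (T x) \<le> norm x)"

lemma hermitian_op_id: "hermitian_op id"
  by (simp add: hermitian_op_def)

lemma hermitian_op_plus: "hermitian_op A \<Longrightarrow> hermitian_op B \<Longrightarrow> hermitian_op (op_plus A B)"
  by (simp add: hermitian_op_def op_plus_def cinner_add_left cinner_add_right)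

lemma hermitian_op_minus: "hermitian_op A \<Longrightarrow> hermitian_op B \<Longrightarrow> hermitian_op (op_minus A B)"
  by (simp add: hermitian_op_def op_minus_def cinner_diff_left cinner_diff_right)

lemma hermitian_op_scale_real: "hermitian_op A \<Longrightarrow> hermitian_op (op_scale (complex_of_real t) A)"
  by (simp add: hermitian_op_def op_scale_def cinner_scaleC_left cinner_scaleC_right)

lemma hermitian_op_comp_commuting:
  "hermitian_op A \<Longrightarrow> hermitian_op B \<Longrightarrow> A \<circ> B = B \<circ> A \<Longrightarrow> hermitian_op (A \<circ> B)"
  unfolding hermitian_op_def by (metis comp_apply)

lemma contraction_op_id: "contraction_op id"
  by (simp add: contraction_op_def)

lemma contraction_op_comp: "contraction_op A \<Longrightarrow> contraction_op B \<Longrightarrow> contraction_op (A \<circ> B)"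
  unfolding contraction_op_def by (metis comp_apply order_trans)

lemma pos_op_square: "hermitian_op T \<Longrightarrow> pos_op (T \<circ> T)"
  unfolding pos_op_def hermitian_op_def by (metis comp_apply Im_cinner_self cinner_self_nonneg)

lemma pos_op_id_minus_square:
  assumes "hermitian_op T" "contraction_op T"
  shows "pos_op (op_minus id (T \<circ> T))"
  unfolding pos_op_def
proof
  fix x
  have "cinner x (op_minus id (T \<circ> T) x) = cinner x x - cinner (T x) (T x)"
    using assms(1) by (simp add: op_minus_def cinner_diff_right hermitian_op_def)
  moreover have "Re (cinner (T x) (T x)) \<le> Re (cinner x x)"
    using assms(2) by (simp add: contraction_op_def power_mono flip: power2_norm_eq_cinner)
  ultimately show "Im (cinner x (op_minus id (T \<circ> T) x)) = 0 \<and> 0 \<le> Re (cinner x (op_minus id (T \<circ> T) x))"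
    by simp
qed

lemma hermitian_op_if_real_form:
  assumes "A \<in> BH" "\<And>x. Im (cinner x (A x)) = 0"
  shows "hermitian_op A"
  unfolding hermitian_op_def
proof (intro allI)
  fix x y
  have "cinner (x + y) (A (x + y)) = cinner x (A x) + cinner x (A y) + cinner y (A x) + cinner y (A y)"
    using assms(1) by (simp add: BH_apply_add cinner_add_left cinner_add_right)
  then have Im: "Im (cinner x (A y)) + Im (cinner y (A x)) = 0"
    using assms(2)[of "x + y"] assms(2)[of x] assms(2)[of y] by simp
  have "cinner (x + \<i> *\<^sub>C y) (A (x + \<i> *\<^sub>C y)) =
      cinner x (A x) + \<i> * cinner x (A y) - \<i> * cinner y (A x) + cinner y (A y)"
    using assms(1) by (simp add: BH_apply_add BH_apply_scaleC cinner_add_left cinner_add_right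
        cinner_scaleC_left cinner_scaleC_right algebra_simps)
  then have Re: "Re (cinner x (A y)) - Re (cinner y (A x)) = 0"
    using assms(2)[of "x + \<i> *\<^sub>C y"] assms(2)[of x] assms(2)[of y] by simp
  from Im Re have "cinner x (A y) = cnj (cinner y (A x))"
    by (simp add: complex_eq_iff)
  then show "cinner (A x) y = cinner x (A y)"
    by (metis cinner_conj)
qed

text \<open>The form bound at \<open>x + A x\<close> and \<open>x - A x\<close>, together with the parallelogram law,
  yields \<open>\<parallel>A x\<parallel>\<^sup>2 \<le> \<parallel>x\<parallel>\<^sup>2\<close>.\<close>

lemma contraction_op_if_form_bounded:
  assumes "A \<in> BH" "hermitian_op A" "\<And>x. \<bar>Re (cinner x (A x))\<bar> \<le> Re (cinner x x)"
  shows "contraction_op A"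
  unfolding contraction_op_def
proof
  fix x
  define y where "y = A x"
  have "Re (cinner (x + y) (A (x + y))) - Re (cinner (x - y) (A (x - y))) =
      Re (cinner (x + y) (A (x + y)) - cinner (x - y) (A (x - y)))"
    by simp
  also have "\<dots> = Re (2 * cinner x (A y) + 2 * cinner y (A x))"
    using assms(1) by (simp add: BH_apply_add BH_apply_diff cinner_add_left cinner_add_right
        cinner_diff_left cinner_diff_right algebra_simps)
  also have "\<dots> = 4 * Re (cinner y y)"
    using assms(2) by (simp add: hermitian_op_def y_def)
  finally have "Re (cinner (x + y) (A (x + y))) - Re (cinner (x - y) (A (x - y))) = 4 * Re (cinner y y)" .
  moreover have "Re (cinner (x + y) (x + y)) + Re (cinner (x - y) (x - y)) = 2 * Re (cinner x x) + 2 * Re (cinner y y)"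
    by (simp add: cinner_add_left cinner_add_right cinner_diff_left cinner_diff_right)
  moreover have "Re (cinner (x + y) (A (x + y))) \<le> Re (cinner (x + y) (x + y))"
    "- Re (cinner (x - y) (A (x - y))) \<le> Re (cinner (x - y) (x - y))"
    using assms(3)[of "x + y"] assms(3)[of "x - y"] by simp_all
  ultimately have "(norm y)\<^sup>2 \<le> (norm x)\<^sup>2"
    by (simp add: power2_norm_eq_cinner)
  then show "norm (A x) \<le> norm x"
    unfolding y_def by (rule power2_le_imp_le) simp
qed

text \<open>Hermiticity is recovered
  from \<open>-I \<le> A \<le> I\<close> by polarization instead.\<close>

lemma observable_in_hermitian_contraction:
  assumes "observable_in M A" "M \<subseteq> BH"
  shows "hermitian_op A" "contraction_op A"
proof -
  have "A \<in> BH"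
    using assms by (auto simp: observable_in_def)
  moreover have "Im (cinner x (A x)) = 0" "\<bar>Re (cinner x (A x))\<bar> \<le> Re (cinner x x)" for x
    using assms(1) unfolding observable_in_def op_le_def pos_op_def
    by (auto simp: op_minus_def op_scale_def cinner_diff_right cinner_add_right abs_le_iff
        dest!: spec[of _ x])
  ultimately show "hermitian_op A" "contraction_op A"
    by (auto intro!: hermitian_op_if_real_form contraction_op_if_form_bounded)
qed

section \<open>Products of commuting operators\<close>

definition commuting_family :: "('i \<Rightarrow> ('h \<Rightarrow> 'h)) \<Rightarrow> 'i set \<Rightarrow> bool" where
  "commuting_family f S \<longleftrightarrow> (\<forall>i\<in>S. \<forall>j\<in>S. f i \<circ> f j = f j \<circ> f i)"

lemma commuting_family_insert:
  "commuting_family f (insert a S) \<longleftrightarrow> (\<forall>j\<in>S. f a \<circ> f j = f j \<circ> f a) \<and> commuting_family f S"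
  unfolding commuting_family_def by auto

lemma foldr_comp_insort:
  assumes "\<forall>j\<in>set xs. f a \<circ> f j = f j \<circ> f a"
  shows "foldr (\<lambda>i acc. f i \<circ> acc) (insort a xs) id = f a \<circ> foldr (\<lambda>i acc. f i \<circ> acc) xs id"
  using assms by (induction xs) (simp_all, metis comp_assoc)

lemma prod_ops_empty [simp]: "prod_ops f {} = id"
  by (simp add: prod_ops_def)

lemma prod_ops_insert:
  assumes "finite S" "a \<notin> S" "\<forall>j\<in>S. f a \<circ> f j = f j \<circ> f a"
  shows "prod_ops f (insert a S) = f a \<circ> prod_ops f S"
  using assms by (simp add: prod_ops_def sorted_list_of_set_insert foldr_comp_insort)

lemma prod_ops_cong: "(\<And>i. i \<in> S \<Longrightarrow> f i = g i) \<Longrightarrow> prod_ops f S = prod_ops g S"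
  unfolding prod_ops_def by (cases "finite S") (auto intro: foldr_cong)

lemma prod_ops_commute:
  assumes "finite S" "\<forall>j\<in>S. T \<circ> f j = f j \<circ> T"
  shows "T \<circ> prod_ops f S = prod_ops f S \<circ> T"
proof -
  have "T \<circ> foldr (\<lambda>i acc. f i \<circ> acc) xs id = foldr (\<lambda>i acc. f i \<circ> acc) xs id \<circ> T"
    if "\<forall>j\<in>set xs. T \<circ> f j = f j \<circ> T" for xs
    using that by (induction xs) (simp_all, metis comp_assoc)
  with assms show ?thesis
    by (simp add: prod_ops_def)
qed

lemma prod_ops_closed:
  assumes "finite S" "\<forall>i\<in>S. f i \<in> C" "id \<in> C" "\<forall>A\<in>C. \<forall>B\<in>C. A \<circ> B \<in> C"
  shows "prod_ops f S \<in> C"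
proof -
  have "foldr (\<lambda>i acc. f i \<circ> acc) xs id \<in> C" if "\<forall>i\<in>set xs. f i \<in> C" for xs
    using that assms(3,4) by (induction xs) auto
  with assms(1,2) show ?thesis
    by (simp add: prod_ops_def)
qed

lemma prod_ops_hermitian:
  assumes "finite S" "commuting_family f S" "\<forall>i\<in>S. hermitian_op (f i)"
  shows "hermitian_op (prod_ops f S)"
  using assms
proof (induction S rule: finite_induct)
  case (insert a S)
  then have comm: "\<forall>j\<in>S. f a \<circ> f j = f j \<circ> f a" and "commuting_family f S"
    unfolding commuting_family_insert by blast+
  with insert have "hermitian_op (f a \<circ> prod_ops f S)"
    by (intro hermitian_op_comp_commuting prod_ops_commute) simp_all
  then show ?case
    unfolding prod_ops_insert[OF insert.hyps comm] .
qed (simp add: hermitian_op_id)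

lemma prod_ops_union:
  assumes "finite S" "finite T" "S \<inter> T = {}" "commuting_family f (S \<union> T)"
  shows "prod_ops f (S \<union> T) = prod_ops f S \<circ> prod_ops f T"
  using assms
proof (induction S rule: finite_induct)
  case (insert a S)
  then have comm: "\<forall>j\<in>S \<union> T. f a \<circ> f j = f j \<circ> f a" and "commuting_family f (S \<union> T)"
    unfolding Un_insert_left commuting_family_insert by blast+
  have IH: "prod_ops f (S \<union> T) = prod_ops f S \<circ> prod_ops f T"
    using insert \<open>commuting_family f (S \<union> T)\<close> by (intro insert.IH) auto
  have "prod_ops f (insert a S \<union> T) = f a \<circ> prod_ops f (S \<union> T)"
    using insert comm prod_ops_insert[of "S \<union> T" a f] by simp
  also have "\<dots> = f a \<circ> (prod_ops f S \<circ> prod_ops f T)"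
    unfolding IH ..
  also have "\<dots> = prod_ops f (insert a S) \<circ> prod_ops f T"
    using comm prod_ops_insert[OF insert.hyps, of f] by (simp add: comp_assoc)
  finally show ?case .
qed simp

lemma prod_ops_if_split:
  assumes "finite S" "R \<subseteq> S" "commuting_family (\<lambda>i. if i \<in> R then g i else e i) S"
  shows "prod_ops (\<lambda>i. if i \<in> R then g i else e i) S = prod_ops g R \<circ> prod_ops e (S - R)"
proof -
  have "S = R \<union> (S - R)" "finite R"
    using assms(1,2) finite_subset by blast+
  with assms have "prod_ops (\<lambda>i. if i \<in> R then g i else e i) S =
      prod_ops (\<lambda>i. if i \<in> R then g i else e i) R \<circ> prod_ops (\<lambda>i. if i \<in> R then g i else e i) (S - R)"
    using prod_ops_union[of R "S - R"] by simp
  also have "\<dots> = prod_ops g R \<circ> prod_ops e (S - R)"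
    using prod_ops_cong[of R "\<lambda>i. if i \<in> R then g i else e i" g]
      prod_ops_cong[of "S - R" "\<lambda>i. if i \<in> R then g i else e i" e] by simp
  finally show ?thesis .
qed

lemma comp_self_commute:
  assumes "a \<circ> b = b \<circ> a"
  shows "(a \<circ> a) \<circ> (b \<circ> b) = (b \<circ> b) \<circ> (a \<circ> a)"
proof -
  have "a (b x) = b (a x)" for x
    using assms by (metis comp_apply)
  then show ?thesis
    by (simp add: fun_eq_iff)
qed

lemma prod_ops_square:
  assumes "finite S" "commuting_family g S"
  shows "prod_ops (\<lambda>i. g i \<circ> g i) S = prod_ops g S \<circ> prod_ops g S"
  using assms
proof (induction S rule: finite_induct)
  case (insert a S)
  then have comm: "\<forall>j\<in>S. g a \<circ> g j = g j \<circ> g a" and "commuting_family g S"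
    unfolding commuting_family_insert by blast+
  have "g a (prod_ops g S x) = prod_ops g S (g a x)" for x
    using prod_ops_commute[OF insert.hyps(1) comm] by (metis comp_apply)
  then have swap: "(g a \<circ> g a) \<circ> (prod_ops g S \<circ> prod_ops g S) = (g a \<circ> prod_ops g S) \<circ> (g a \<circ> prod_ops g S)"
    by (simp add: fun_eq_iff)
  have "prod_ops (\<lambda>i. g i \<circ> g i) (insert a S) = (g a \<circ> g a) \<circ> prod_ops (\<lambda>i. g i \<circ> g i) S"
    using insert.hyps comm by (intro prod_ops_insert) (simp_all add: comp_self_commute)
  also have "\<dots> = (g a \<circ> g a) \<circ> (prod_ops g S \<circ> prod_ops g S)"
    unfolding insert.IH[OF \<open>commuting_family g S\<close>] ..
  also have "\<dots> = (g a \<circ> prod_ops g S) \<circ> (g a \<circ> prod_ops g S)"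
    by (rule swap)
  also have "\<dots> = prod_ops g (insert a S) \<circ> prod_ops g (insert a S)"
    unfolding prod_ops_insert[OF insert.hyps comm] ..
  finally show ?case .
qed simp

section \<open>States\<close>

context
  fixes N :: "('h::complex_inner \<Rightarrow> 'h) set" and tau :: "('h \<Rightarrow> 'h) \<Rightarrow> complex"
  assumes N: "unital_op_algebra N" and st: "is_state N tau"
begin

lemma state_plus: "A \<in> N \<Longrightarrow> B \<in> N \<Longrightarrow> tau (op_plus A B) = tau A + tau B"
  using st by (simp add: is_state_def)

lemma state_scale: "A \<in> N \<Longrightarrow> tau (op_scale c A) = c * tau A"
  using st by (simp add: is_state_def)

lemma state_minus:
  assumes "A \<in> N" "B \<in> N"
  shows "tau (op_minus A B) = tau A - tau B"
proof -
  have "op_scale (- 1) B \<in> N"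
    using unital_op_algebra_scale[OF N \<open>B \<in> N\<close>, of "- 1"] by simp
  with assms show ?thesis
    by (simp add: op_minus_eq_op_plus_op_scale state_plus state_scale)
qed

lemma state_square_nonneg:
  assumes "T \<in> N" "hermitian_op T"
  shows "Im (tau (T \<circ> T)) = 0 \<and> 0 \<le> Re (tau (T \<circ> T))"
  using st assms N unfolding is_state_def by (simp add: pos_op_square unital_op_algebra_comp)

lemma state_square_le_one:
  assumes "T \<in> N" "hermitian_op T" "contraction_op T"
  shows "Re (tau (T \<circ> T)) \<le> 1"
proof -
  have TT: "T \<circ> T \<in> N" and "op_minus id (T \<circ> T) \<in> N"
    using assms(1) N by (simp_all add: unital_op_algebra_comp unital_op_algebra_minus unital_op_algebra_id)
  then have "0 \<le> Re (tau (op_minus id (T \<circ> T)))"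
    using st pos_op_id_minus_square[OF assms(2,3)] by (simp add: is_state_def)
  also have "tau (op_minus id (T \<circ> T)) = 1 - tau (T \<circ> T)"
    using st N TT by (simp add: state_minus unital_op_algebra_id is_state_def)
  finally show ?thesis
    by simp
qed

lemma op_plus_scale_square:
  assumes "P \<in> BH" "X \<in> BH" "P \<circ> X = X \<circ> P"
  shows "op_plus (op_scale (complex_of_real t) P) X \<circ> op_plus (op_scale (complex_of_real t) P) X =
    op_plus (op_plus (op_scale (complex_of_real (t\<^sup>2)) (P \<circ> P)) (op_scale (complex_of_real (2 * t)) (P \<circ> X)))
      (X \<circ> X)"
proof
  fix x
  have "X (P x) = P (X x)"
    using assms(3) by (metis comp_apply)
  with assms(1,2) show "(op_plus (op_scale (complex_of_real t) P) X \<circ> op_plus (op_scale (complex_of_real t) P) X) x =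
    op_plus (op_plus (op_scale (complex_of_real (t\<^sup>2)) (P \<circ> P)) (op_scale (complex_of_real (2 * t)) (P \<circ> X)))
      (X \<circ> X) x"
    by (simp only: op_plus_def op_scale_def scaleC_of_real comp_apply)
      (simp add: BH_apply_add BH_apply_scaleR scaleR_add_right power2_eq_square algebra_simps scaleR_2
        flip: scaleR_add_left)
qed

lemma state_cauchy_schwarz:
  assumes "P \<in> N" "X \<in> N" "hermitian_op P" "hermitian_op X" "P \<circ> X = X \<circ> P"
  shows "(cmod (tau (P \<circ> X)))\<^sup>2 \<le> Re (tau (P \<circ> P)) * Re (tau (X \<circ> X))"
proof -
  let ?Z = "\<lambda>t. op_plus (op_scale (complex_of_real t) P) X"
  have PP: "P \<circ> P \<in> N" and PX: "P \<circ> X \<in> N" and XX: "X \<circ> X \<in> N"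
    using assms(1,2) N by (simp_all add: unital_op_algebra_comp)
  have expand: "tau (?Z t \<circ> ?Z t) =
      of_real (t\<^sup>2) * tau (P \<circ> P) + of_real (2 * t) * tau (P \<circ> X) + tau (X \<circ> X)" for t
  proof -
    have "op_scale (of_real (t\<^sup>2)) (P \<circ> P) \<in> N" "op_scale (of_real (2 * t)) (P \<circ> X) \<in> N"
      by (rule unital_op_algebra_scale[OF N PP], rule unital_op_algebra_scale[OF N PX])
    then show ?thesis
      using PP PX XX assms(1,2) N
      unfolding op_plus_scale_square[OF unital_op_algebra_BH[OF N assms(1)] unital_op_algebra_BH[OF N assms(2)] assms(5)]
      by (simp only: state_plus state_scale unital_op_algebra_plus)
  qed
  have Z: "Im (tau (?Z t \<circ> ?Z t)) = 0 \<and> 0 \<le> Re (tau (?Z t \<circ> ?Z t))" for t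
    using assms N
    by (intro state_square_nonneg) (simp_all add: hermitian_op_plus hermitian_op_scale_real
        unital_op_algebra_plus unital_op_algebra_scale)
  have P: "Im (tau (P \<circ> P)) = 0 \<and> 0 \<le> Re (tau (P \<circ> P))"
    and X: "Im (tau (X \<circ> X)) = 0 \<and> 0 \<le> Re (tau (X \<circ> X))"
    using assms by (simp_all add: state_square_nonneg)
  from Z[of 1] P X have real: "Im (tau (P \<circ> X)) = 0"
    unfolding expand by simp
  have "0 \<le> Re (tau (P \<circ> P)) * t\<^sup>2 + 2 * Re (tau (P \<circ> X)) * t + Re (tau (X \<circ> X))" for t
    using Z[of t] unfolding expand by (simp add: algebra_simps)
  with P X have "(Re (tau (P \<circ> X)))\<^sup>2 \<le> Re (tau (P \<circ> P)) * Re (tau (X \<circ> X))"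
    by (intro quadratic_nonneg_discriminant) auto
  with real show ?thesis
    by (simp add: cmod_power2)
qed

lemma state_comp_contraction_bound:
  assumes "P \<in> N" "X \<in> N" "hermitian_op P" "hermitian_op X" "contraction_op X" "P \<circ> X = X \<circ> P"
  shows "(cmod (tau (P \<circ> X)))\<^sup>2 \<le> Re (tau (P \<circ> P))"
proof -
  have "(cmod (tau (P \<circ> X)))\<^sup>2 \<le> Re (tau (P \<circ> P)) * Re (tau (X \<circ> X))"
    using assms(1-4,6) by (rule state_cauchy_schwarz)
  also have "\<dots> \<le> Re (tau (P \<circ> P))"
    using assms by (simp add: mult_left_le state_square_le_one state_square_nonneg)
  finally show ?thesis .
qed

lemma state_square_plus_add_square_minus_le_four:
  assumes "A \<in> N" "B \<in> N" "hermitian_op A" "hermitian_op B" "contraction_op A" "contraction_op B"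
  shows "Re (tau (op_plus A B \<circ> op_plus A B)) + Re (tau (op_minus A B \<circ> op_minus A B)) \<le> 4"
proof -
  have AA: "A \<circ> A \<in> N" and BB: "B \<circ> B \<in> N"
    and plus: "op_plus A B \<circ> op_plus A B \<in> N" and minus: "op_minus A B \<circ> op_minus A B \<in> N"
    using assms(1,2) N by (simp_all add: unital_op_algebra_comp unital_op_algebra_plus unital_op_algebra_minus)
  have "tau (op_plus A B \<circ> op_plus A B) + tau (op_minus A B \<circ> op_minus A B) =
      tau (op_plus (op_plus A B \<circ> op_plus A B) (op_minus A B \<circ> op_minus A B))"
    using plus minus by (simp add: state_plus)
  also have "op_plus (op_plus A B \<circ> op_plus A B) (op_minus A B \<circ> op_minus A B) =
      op_plus (op_plus (A \<circ> A) (A \<circ> A)) (op_plus (B \<circ> B) (B \<circ> B))"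
    using assms(1,2) N
    by (auto simp: fun_eq_iff op_plus_def op_minus_def unital_op_algebra_BH BH_apply_add BH_apply_diff
        algebra_simps)
  also have "tau \<dots> = 2 * tau (A \<circ> A) + 2 * tau (B \<circ> B)"
    using AA BB N by (simp add: state_plus unital_op_algebra_plus flip: mult_2)
  finally have sum: "tau (op_plus A B \<circ> op_plus A B) + tau (op_minus A B \<circ> op_minus A B) =
      2 * tau (A \<circ> A) + 2 * tau (B \<circ> B)" .
  have "Re (tau (op_plus A B \<circ> op_plus A B)) + Re (tau (op_minus A B \<circ> op_minus A B)) =
      Re (tau (op_plus A B \<circ> op_plus A B) + tau (op_minus A B \<circ> op_minus A B))"
    by simp
  also have "\<dots> = 2 * Re (tau (A \<circ> A)) + 2 * Re (tau (B \<circ> B))"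
    unfolding sum by simp
  also have "\<dots> \<le> 4"
    using assms state_square_le_one[of A] state_square_le_one[of B] by simp
  finally show ?thesis .
qed

end

section \<open>MCvNA models\<close>

lemma Gamma_netD:
  assumes "R \<in> Gamma_net n m src h"
  shows "R \<subseteq> {1..m}" "finite R" "card R = h"
  using assms finite_subset by (auto simp: Gamma_net_def)

locale mcvna =
  fixes n m :: nat and src :: "nat \<Rightarrow> nat set"
    and M :: "nat \<Rightarrow> ('h::complex_inner \<Rightarrow> 'h) set" and tau :: "('h \<Rightarrow> 'h) \<Rightarrow> complex"
  assumes model: "mcvna_model n m src M tau"
begin

lemma party_von_neumann_algebra: "i \<in> {1..m} \<Longrightarrow> von_neumann_algebra (M i)"
  using model by (simp add: mcvna_model_def)

lemma party_BH: "i \<in> {1..m} \<Longrightarrow> M i \<subseteq> BH"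
  using party_von_neumann_algebra by (simp add: von_neumann_algebra_def)

lemma party_unital_op_algebra: "i \<in> {1..m} \<Longrightarrow> unital_op_algebra (M i)"
  using party_von_neumann_algebra double_commutant_unital_op_algebra
  by (metis von_neumann_algebra_def)

lemma joint_unital_op_algebra: "unital_op_algebra (joint_vN M m)"
  by (simp add: joint_vN_def double_commutant_unital_op_algebra)

lemma party_subset_joint: "i \<in> {1..m} \<Longrightarrow> M i \<subseteq> joint_vN M m"
proof -
  assume "i \<in> {1..m}"
  moreover have "(\<Union>i\<in>{1..m}. M i) \<subseteq> BH"
    using party_BH by blast
  ultimately show ?thesis
    unfolding joint_vN_def using subset_double_commutant by blast
qed

lemma joint_state: "is_state (joint_vN M m) tau"
  using model by (simp add: mcvna_model_def)

lemma parties_commute: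
  assumes "i \<in> {1..m}" "j \<in> {1..m}" "i \<noteq> j" "A \<in> M i" "B \<in> M j"
  shows "A \<circ> B = B \<circ> A"
proof -
  have "A \<in> commutant (M j)"
    using model assms(1-4) unfolding mcvna_model_def by blast
  with assms(5) show ?thesis
    by (simp add: commutant_def)
qed

lemma commuting_family_parties:
  "S \<subseteq> {1..m} \<Longrightarrow> \<forall>i\<in>S. f i \<in> M i \<Longrightarrow> commuting_family f S"
  unfolding commuting_family_def by (metis parties_commute subsetD)

lemma observable_party:
  assumes "i \<in> {1..m}" "observable_in (M i) A"
  shows "A \<in> M i" "A \<in> joint_vN M m" "hermitian_op A" "contraction_op A"
  using assms party_subset_joint observable_in_hermitian_contraction[OF assms(2) party_BH]
  by (auto simp: observable_in_def)

lemma observables_plus_minus_party: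
  assumes "i \<in> {1..m}" "observable_in (M i) A" "observable_in (M i) B"
  shows "op_plus A B \<in> M i \<and> hermitian_op (op_plus A B)"
    and "op_minus A B \<in> M i \<and> hermitian_op (op_minus A B)"
  using observable_party[OF assms(1,2)] observable_party[OF assms(1,3)]
    party_unital_op_algebra[OF assms(1)]
  by (simp_all add: unital_op_algebra_plus unital_op_algebra_minus hermitian_op_plus hermitian_op_minus)

lemma prod_ops_parties:
  assumes "S \<subseteq> {1..m}" "\<forall>i\<in>S. f i \<in> M i \<and> hermitian_op (f i)"
  shows "prod_ops f S \<in> joint_vN M m" "hermitian_op (prod_ops f S)"
proof -
  have "finite S"
    using assms(1) finite_subset by blast
  moreover have "\<forall>i\<in>S. f i \<in> joint_vN M m"
    using assms party_subset_joint by blast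
  ultimately show "prod_ops f S \<in> joint_vN M m"
    using joint_unital_op_algebra by (simp add: prod_ops_closed unital_op_algebra_id unital_op_algebra_comp)
  show "hermitian_op (prod_ops f S)"
    using assms \<open>finite S\<close> by (intro prod_ops_hermitian commuting_family_parties) auto
qed

lemma prod_ops_parties_commute:
  assumes "S \<subseteq> {1..m}" "T \<subseteq> {1..m}" "S \<inter> T = {}" "\<forall>i\<in>S. f i \<in> M i" "\<forall>j\<in>T. g j \<in> M j"
  shows "prod_ops f S \<circ> prod_ops g T = prod_ops g T \<circ> prod_ops f S"
proof -
  have "finite S" "finite T"
    using assms(1,2) finite_subset by blast+
  moreover have "f i \<circ> g j = g j \<circ> f i" if "i \<in> S" "j \<in> T" for i j
    using that assms by (intro parties_commute[of i j]) auto
  then have "f i \<circ> prod_ops g T = prod_ops g T \<circ> f i" if "i \<in> S" for i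
    using \<open>finite T\<close> that by (simp add: prod_ops_commute)
  ultimately show ?thesis
    by (metis prod_ops_commute)
qed

lemma tau_prod_ops_independent:
  assumes "2 \<le> h" "h \<le> hmax n m src" "R \<in> Gamma_net n m src h" "\<forall>k\<in>R. A k \<in> M k"
  shows "tau (prod_ops A R) = (\<Prod>k\<in>R. tau (A k))"
  using model assms unfolding mcvna_model_def network_state_def by blast

lemma Re_tau_square_prod_ops_independent:
  assumes "2 \<le> h" "h \<le> hmax n m src" "R \<in> Gamma_net n m src h"
    and g: "\<forall>i\<in>R. g i \<in> M i \<and> hermitian_op (g i)"
  shows "Re (tau (prod_ops g R \<circ> prod_ops g R)) = (\<Prod>k\<in>R. Re (tau (g k \<circ> g k)))"
proof -
  note R = Gamma_netD[OF assms(3)]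
  have gM: "\<forall>i\<in>R. g i \<in> M i"
    using g by blast
  have "\<forall>k\<in>R. g k \<circ> g k \<in> M k"
    using gM R(1) unital_op_algebra_comp[OF party_unital_op_algebra] by blast
  with assms(1-3) have "tau (prod_ops g R \<circ> prod_ops g R) = (\<Prod>k\<in>R. tau (g k \<circ> g k))"
    unfolding prod_ops_square[OF R(2) commuting_family_parties[OF R(1) gM], symmetric]
    by (rule tau_prod_ops_independent)
  also have "Re \<dots> = (\<Prod>k\<in>R. Re (tau (g k \<circ> g k)))"
  proof (intro Re_prod_Reals)
    fix k assume "k \<in> R"
    then have "g k \<in> joint_vN M m" "hermitian_op (g k)"
      using g R(1) party_subset_joint by blast+
    then show "tau (g k \<circ> g k) \<in> \<real>"
      using state_square_nonneg[OF joint_unital_op_algebra joint_state] by (simp add: complex_is_Real_iff)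
  qed
  finally show ?thesis .
qed

lemma tau_prod_ops_bound:
  assumes "2 \<le> h" "h \<le> hmax n m src" "R \<in> Gamma_net n m src h"
    and e: "\<forall>i\<in>{1..m}. e i \<in> M i \<and> hermitian_op (e i) \<and> contraction_op (e i)"
    and g: "\<forall>i\<in>R. g i \<in> M i \<and> hermitian_op (g i)"
  shows "(cmod (tau (prod_ops (\<lambda>i. if i \<in> R then g i else e i) {1..m})))\<^sup>2 \<le>
    (\<Prod>k\<in>R. Re (tau (g k \<circ> g k)))"
proof -
  note R = Gamma_netD[OF assms(3)]
  let ?P = "prod_ops g R" and ?X = "prod_ops e ({1..m} - R)"
  have "prod_ops (\<lambda>i. if i \<in> R then g i else e i) {1..m} = ?P \<circ> ?X"
    using R e g by (intro prod_ops_if_split commuting_family_parties) auto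
  moreover have "?X \<in> Collect contraction_op"
    by (rule prod_ops_closed) (use e contraction_op_id contraction_op_comp in auto)
  moreover have "?P \<in> joint_vN M m" "hermitian_op ?P" "?X \<in> joint_vN M m" "hermitian_op ?X"
    using R e g by (auto intro!: prod_ops_parties)
  moreover have "?P \<circ> ?X = ?X \<circ> ?P"
    using R e g by (intro prod_ops_parties_commute) auto
  ultimately show ?thesis
    using state_comp_contraction_bound[OF joint_unital_op_algebra joint_state, of ?P ?X]
      Re_tau_square_prod_ops_independent[OF assms(1-3) g] by simp
qed

lemma I_tau_square_le:
  assumes "2 \<le> h" "h \<le> hmax n m src" "R \<in> Gamma_net n m src h"
    and obs: "\<forall>i\<in>{1..m}. observable_in (M i) (A0 i) \<and> observable_in (M i) (A1 i)"
  shows "(cmod (I_tau m R A0 A1 tau))\<^sup>2 \<le>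
    (\<Prod>k\<in>R. Re (tau (op_plus (A0 k) (A1 k) \<circ> op_plus (A0 k) (A1 k))))"
  unfolding I_tau_def
proof (rule tau_prod_ops_bound[OF assms(1-3)])
  show "\<forall>i\<in>{1..m}. A0 i \<in> M i \<and> hermitian_op (A0 i) \<and> contraction_op (A0 i)"
    using obs observable_party by blast
  show "\<forall>i\<in>R. op_plus (A0 i) (A1 i) \<in> M i \<and> hermitian_op (op_plus (A0 i) (A1 i))"
    using obs Gamma_netD(1)[OF assms(3)] observables_plus_minus_party(1) by blast
qed

lemma J_tau_square_le:
  assumes "2 \<le> h" "h \<le> hmax n m src" "R \<in> Gamma_net n m src h"
    and obs: "\<forall>i\<in>{1..m}. observable_in (M i) (A0 i) \<and> observable_in (M i) (A1 i)"
  shows "(cmod (J_tau m R A0 A1 tau))\<^sup>2 \<le>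
    (\<Prod>k\<in>R. Re (tau (op_minus (A0 k) (A1 k) \<circ> op_minus (A0 k) (A1 k))))"
  unfolding J_tau_def
proof (rule tau_prod_ops_bound[OF assms(1-3)])
  show "\<forall>i\<in>{1..m}. A1 i \<in> M i \<and> hermitian_op (A1 i) \<and> contraction_op (A1 i)"
    using obs observable_party by blast
  show "\<forall>i\<in>R. op_minus (A0 i) (A1 i) \<in> M i \<and> hermitian_op (op_minus (A0 i) (A1 i))"
    using obs Gamma_netD(1)[OF assms(3)] observables_plus_minus_party(2) by blast
qed

lemma observables_square_plus_minus_bounds:
  assumes "i \<in> {1..m}" "observable_in (M i) A" "observable_in (M i) B"
  shows "0 \<le> Re (tau (op_plus A B \<circ> op_plus A B))" "0 \<le> Re (tau (op_minus A B \<circ> op_minus A B))"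
    and "Re (tau (op_plus A B \<circ> op_plus A B)) + Re (tau (op_minus A B \<circ> op_minus A B)) \<le> 4"
  using observable_party[OF assms(1,2)] observable_party[OF assms(1,3)]
    state_square_nonneg[OF joint_unital_op_algebra joint_state]
    state_square_plus_add_square_minus_le_four[OF joint_unital_op_algebra joint_state]
  by (simp_all add: unital_op_algebra_plus[OF joint_unital_op_algebra]
      unital_op_algebra_minus[OF joint_unital_op_algebra] hermitian_op_plus hermitian_op_minus)

end

theorem theorem3p1:
  fixes n m h :: nat
    and src :: "nat \<Rightarrow> nat set"
    and M :: "nat \<Rightarrow> ('h::chilbert_space \<Rightarrow> 'h) set"
    and tau :: "('h \<Rightarrow> 'h) \<Rightarrow> complex"
    and A0 A1 :: "nat \<Rightarrow> ('h \<Rightarrow> 'h)"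
    and R :: "nat set"
  assumes "network n m src"
    and "mcvna_model n m src M tau"
    and "2 \<le> h" and "h \<le> hmax n m src"
    and "R \<in> Gamma_net n m src h"
    and "\<forall>i\<in>{1..m}. observable_in (M i) (A0 i) \<and> observable_in (M i) (A1 i)"
  shows "S_tau h m R A0 A1 tau \<le> 2 * sqrt 2"
proof -
  interpret mcvna n m src M tau
    by (rule mcvna.intro) fact
  note R = Gamma_netD[OF assms(5)]
  have "R \<noteq> {}"
    using R(3) assms(3) by auto
  moreover have "0 \<le> Re (tau (op_plus (A0 k) (A1 k) \<circ> op_plus (A0 k) (A1 k))) \<and>
      0 \<le> Re (tau (op_minus (A0 k) (A1 k) \<circ> op_minus (A0 k) (A1 k))) \<and>
      Re (tau (op_plus (A0 k) (A1 k) \<circ> op_plus (A0 k) (A1 k))) +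
      Re (tau (op_minus (A0 k) (A1 k) \<circ> op_minus (A0 k) (A1 k))) \<le> 4" if "k \<in> R" for k
    using that R(1) assms(6) observables_square_plus_minus_bounds[of k "A0 k" "A1 k"] by auto
  ultimately show ?thesis
    unfolding S_tau_def R(3)[symmetric]
    using R(2) I_tau_square_le[OF assms(3-6)] J_tau_square_le[OF assms(3-6)]
    by (intro powr_inverse_card_add_le_two_sqrt_two) auto
qed

end
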